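(* Let $d\ge 5$. If every configuration in $Q^3_{d-1}$ of type $\varphi_1$, $\varphi_2$, $\varphi_3$ or $\varphi_4$ (with dimension $d-1$) is covered, then every configuration in $Q^3_d$ of type $t_1(d)$, $t_2(d)$, $t_3(d)$, $t_4(d)$ or $t_5(d)$ is covered.
   Context: For $n\in\mathbb{N}_0$, $Q^3_n$ is the $3$-uniform hypergraph on $V_n=\{0,1,2\}^n$ whose edges are the triples of pairwise distinct sequences agreeing in $n-1$ coordinates. A loose path from $v_0$ to $v_{2\ell}$ consists of distinct vertices $v_0,\dots,v_{2\ell}$ and distinct edges $e_i=\{v_{2i-2},v_{2i-1},v_{2i}\}$, $i=1,\dots,\ell$. A configuration in $Q^3_n$ is an ordered $4$-tuple $(a,b,x,y)$ of pairwise distinct vertices of $V_n$; it is covered if there is a loose path in $Q^3_n$ from $a$ to $b$ whose vertex set is exactly $V_n\setminus\{x,y\}$. For $v\in V_n$ write $v_i$ for its $i$-th coordinate and $v_{[k]}=(v_1,\dots,v_k)$. A symmetry is a bijection of $V_n$ obtained by permuting the coordinates and, independently in each coordinate, permuting the values $\{0,1,2\}$. A configuration $c=(a,b,x,y)$ in $Q^3_n$ is of a given type if, after applying some symmetry to all four vertices and possibly interchanging $x$ and $y$, the resulting configuration (still denoted $(a,b,x,y)$) satisfies (with $n$ the dimension): $t_1(n)$: $a_n=x_n=0$, $b_n=1$, $y_n=2$, and $a_{[n-1]}\notin\{b_{[n-1]},x_{[n-1]},y_{[n-1]}\}$; $t_2(n)$: $a_n=b_n=0$, $x_n=1$, $y_n=2$,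 and $a_{[n-1]}\notin\{b_{[n-1]},x_{[n-1]},y_{[n-1]}\}$; $t_3(n)$: $a_n=x_n=0$ and $b_n=y_n=1$; $t_4(n)$: $a_n=0$, $b_n=x_n=1$, $y_n=2$, and $b_{[n-1]}\notin\{a_{[n-1]},x_{[n-1]},y_{[n-1]}\}$; $t_5(n)$: $a_n=b_n=0$, $x_n=1$, $y_n=2$, and $b_{[n-1]}\notin\{a_{[n-1]},x_{[n-1]},y_{[n-1]}\}$; $\varphi_1$: the $t_1(n)$ conditions hold and there is $i\in[n-1]$ with $b_i\in\{a_i,x_i,y_i\}$; $\varphi_2$: the $t_2(n)$ or the $t_5(n)$ conditions hold and there are two distinct $i,i'\in[n-1]$, $u\in\{a,b\}$, $w\in\{x,y\}$ with $u_i=w_i$ and $u_{i'}=w_{i'}$; $\varphi_3$: the $t_3(n)$ conditions hold and there is $i\in[n-1]$ with $a_i=y_i$ or $b_i=x_i$; $\varphi_4$: the $t_4(n)$ conditions hold and there is $i\in[n-1]$ with $a_i\in\{b_i,x_i,y_i\}$. *)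

theory Defs
  imports Main "HOL-Combinatorics.Permutations"
begin

(* Vertices of Q^3_n: lists of length n over {0,1,2}.
   Paper coordinate v_i (i in [n], 1-indexed) is  v ! (i - 1);  v_[k] is take k v. *)
definition verts :: "nat \<Rightarrow> nat list set" where
  "verts n = {v. length v = n \<and> set v \<subseteq> {0,1,2}}"

definition is_edge :: "nat \<Rightarrow> nat list \<Rightarrow> nat list \<Rightarrow> nat list \<Rightarrow> bool" where
  "is_edge n u v w \<longleftrightarrow> u \<in> verts n \<and> v \<in> verts n \<and> w \<in> verts n \<and>
     u \<noteq> v \<and> v \<noteq> w \<and> u \<noteq> w \<and>
     (\<exists>i<n. \<forall>j<n. j \<noteq> i \<longrightarrow> u ! j = v ! j \<and> v ! j = w ! j)"

definition loose_path :: "nat \<Rightarrow> nat list list \<Rightarrow> bool" where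
  "loose_path n p \<longleftrightarrow> odd (length p) \<and> distinct p \<and>
     (\<forall>i < length p div 2. is_edge n (p ! (2*i)) (p ! (2*i+1)) (p ! (2*i+2))) \<and>
     (\<forall>i < length p div 2. \<forall>k < length p div 2. i \<noteq> k \<longrightarrow>
        {p ! (2*i), p ! (2*i+1), p ! (2*i+2)} \<noteq> {p ! (2*k), p ! (2*k+1), p ! (2*k+2)})"

definition is_config :: "nat \<Rightarrow> nat list \<times> nat list \<times> nat list \<times> nat list \<Rightarrow> bool" where
  "is_config n c = (case c of (a,b,x,y) \<Rightarrow>
     a \<in> verts n \<and> b \<in> verts n \<and> x \<in> verts n \<and> y \<in> verts n \<and>
     distinct [a,b,x,y])"

definition covered :: "nat \<Rightarrow> nat list \<times> nat list \<times> nat list \<times> nat list \<Rightarrow> bool" where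
  "covered n c = (case c of (a,b,x,y) \<Rightarrow>
     \<exists>p. loose_path n p \<and> hd p = a \<and> last p = b \<and> set p = verts n - {x,y})"

definition is_symmetry :: "nat \<Rightarrow> (nat list \<Rightarrow> nat list) \<Rightarrow> bool" where
  "is_symmetry n f \<longleftrightarrow> (\<exists>\<sigma> \<pi>. \<sigma> permutes {..<n} \<and> (\<forall>j<n. \<pi> j permutes {0,1,2::nat}) \<and>
      (\<forall>v \<in> verts n. f v = map (\<lambda>j. \<pi> j (v ! \<sigma> j)) [0..<n]))"

type_synonym cond = "nat \<Rightarrow> nat list \<Rightarrow> nat list \<Rightarrow> nat list \<Rightarrow> nat list \<Rightarrow> bool"

definition of_type :: "cond \<Rightarrow> nat \<Rightarrow> nat list \<times> nat list \<times> nat list \<times> nat list \<Rightarrow> bool" where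
  "of_type P n c = (case c of (a,b,x,y) \<Rightarrow>
     \<exists>f. is_symmetry n f \<and> (P n (f a) (f b) (f x) (f y) \<or> P n (f a) (f b) (f y) (f x)))"

definition t1 :: cond where
  "t1 n a b x y \<longleftrightarrow> a!(n-1) = 0 \<and> x!(n-1) = 0 \<and> b!(n-1) = 1 \<and> y!(n-1) = 2 \<and>
     take (n-1) a \<notin> {take (n-1) b, take (n-1) x, take (n-1) y}"

definition t2 :: cond where
  "t2 n a b x y \<longleftrightarrow> a!(n-1) = 0 \<and> b!(n-1) = 0 \<and> x!(n-1) = 1 \<and> y!(n-1) = 2 \<and>
     take (n-1) a \<notin> {take (n-1) b, take (n-1) x, take (n-1) y}"

definition t3 :: cond where
  "t3 n a b x y \<longleftrightarrow> a!(n-1) = 0 \<and> x!(n-1) = 0 \<and> b!(n-1) = 1 \<and> y!(n-1) = 1"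

definition t4 :: cond where
  "t4 n a b x y \<longleftrightarrow> a!(n-1) = 0 \<and> b!(n-1) = 1 \<and> x!(n-1) = 1 \<and> y!(n-1) = 2 \<and>
     take (n-1) b \<notin> {take (n-1) a, take (n-1) x, take (n-1) y}"

definition t5 :: cond where
  "t5 n a b x y \<longleftrightarrow> a!(n-1) = 0 \<and> b!(n-1) = 0 \<and> x!(n-1) = 1 \<and> y!(n-1) = 2 \<and>
     take (n-1) b \<notin> {take (n-1) a, take (n-1) x, take (n-1) y}"

(* i ranges over [n-1] = {1..n-1}, i.e. 0-based index j < n-1 *)
definition phi1 :: cond where
  "phi1 n a b x y \<longleftrightarrow> t1 n a b x y \<and> (\<exists>j < n-1. b!j \<in> {a!j, x!j, y!j})"

definition phi2 :: cond where
  "phi2 n a b x y \<longleftrightarrow> (t2 n a b x y \<or> t5 n a b x y) \<and>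
     (\<exists>j < n-1. \<exists>j' < n-1. j \<noteq> j' \<and> (\<exists>u \<in> {a,b}. \<exists>w \<in> {x,y}. u!j = w!j \<and> u!j' = w!j'))"

definition phi3 :: cond where
  "phi3 n a b x y \<longleftrightarrow> t3 n a b x y \<and> (\<exists>j < n-1. a!j = y!j \<or> b!j = x!j)"

definition phi4 :: cond where
  "phi4 n a b x y \<longleftrightarrow> t4 n a b x y \<and> (\<exists>j < n-1. a!j \<in> {b!j, x!j, y!j})"

end

theory Submission
  imports Defs
begin

text \<open>Write a vertex of \<open>Q\<^sup>3\<^sub>d\<close> as \<open>v @ [k]\<close> with \<open>v\<close> a vertex of \<open>Q\<^sup>3\<^sub>d\<^sub>-\<^sub>1\<close>: the
  three values of the last coordinate split the cube into three layers, each a copy of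
  \<open>Q\<^sup>3\<^sub>d\<^sub>-\<^sub>1\<close>. After normalising the last coordinate, a configuration of type
  \<open>t\<^sub>1\<close>, ..., \<open>t\<^sub>5\<close> is covered by a loose path that traverses the layers one after
  the other. Inside a layer it follows a spanning path given by the hypothesis for a
  \<open>\<phi>\<^sub>3\<close>-configuration, or a Hamiltonian path obtained from a \<open>\<phi>\<^sub>4\<close>-configuration;
  between layers it uses edges \<open>{v @ [0], v @ [1], v @ [2]}\<close> of a single column. The
  vertices at which the path changes layer are constructed coordinate by coordinate so that
  all configurations needed inside the layers are of type \<open>\<phi>\<^sub>3\<close>; this construction uses
  four coordinates, hence \<open>d \<ge> 5\<close>.\<close>

section \<open>Loose paths as edge chains\<close>

fun edge_chain :: "nat \<Rightarrow> nat list list \<Rightarrow> bool" where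
  "edge_chain n [] = False"
| "edge_chain n [v] = True"
| "edge_chain n [u, w] = False"
| "edge_chain n (u # w # v # p) \<longleftrightarrow> is_edge n u w v \<and> edge_chain n (v # p)"

lemma edge_chain_iff:
  "edge_chain n p \<longleftrightarrow> odd (length p) \<and>
     (\<forall>i < length p div 2. is_edge n (p ! (2*i)) (p ! (2*i+1)) (p ! (2*i+2)))"
proof (induction n p rule: edge_chain.induct)
  case (4 n u w v p)
  have l: "length (u # w # v # p) div 2 = Suc (length (v # p) div 2)"
    and o: "odd (length (u # w # v # p)) = odd (length (v # p))" by simp_all
  show ?case
    unfolding l o All_less_Suc2 using 4 by (auto simp add: numeral_2_eq_2)
qed auto

text \<open>Without repeated vertices, the middle vertex \<open>p ! (2*i+1)\<close> of the \<open>i\<close>-th edge lies in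
  no other edge, so the distinctness of edges required by \<^const>\<open>loose_path\<close> is automatic.\<close>

lemma loose_path_iff_edge_chain: "loose_path n p \<longleftrightarrow> edge_chain n p \<and> distinct p"
proof -
  have "{p ! (2*i), p ! (2*i+1), p ! (2*i+2)} \<noteq> {p ! (2*k), p ! (2*k+1), p ! (2*k+2)}"
    if "distinct p" "odd (length p)" "i < length p div 2" "k < length p div 2" "i \<noteq> k" for i k
  proof
    assume "{p ! (2*i), p ! (2*i+1), p ! (2*i+2)} = {p ! (2*k), p ! (2*k+1), p ! (2*k+2)}"
    then have "p ! (2*i+1) \<in> {p ! (2*k), p ! (2*k+1), p ! (2*k+2)}" by blast
    moreover have "2*i+2 < length p" "2*k+2 < length p" using that by (auto elim!: oddE)
    ultimately have "2*i+1 = 2*k \<or> 2*i+1 = 2*k+1 \<or> 2*i+1 = 2*k+2"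
      using \<open>distinct p\<close> by (auto simp: nth_eq_iff_index_eq)
    then show False using \<open>i \<noteq> k\<close> by presburger
  qed
  then show ?thesis unfolding loose_path_def edge_chain_iff by blast
qed

lemma edge_chain_not_Nil: "edge_chain n p \<Longrightarrow> p \<noteq> []"
  by (cases p) auto

lemma edge_chain_append:
  "edge_chain n p \<Longrightarrow> edge_chain n q \<Longrightarrow> is_edge n (last p) w (hd q) \<Longrightarrow> edge_chain n (p @ w # q)"
proof (induction n p rule: edge_chain.induct)
  case (2 n v)
  then show ?case by (cases q) auto
qed auto

lemma is_edge_commute: "is_edge n u w v \<Longrightarrow> is_edge n v w u"
  unfolding is_edge_def by metis

lemma edge_chain_rev: "edge_chain n p \<Longrightarrow> edge_chain n (rev p)"
proof (induction n p rule: edge_chain.induct)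
  case (4 n u w v p)
  then have "edge_chain n ((rev p @ [v]) @ w # [u])"
    by (intro edge_chain_append[where q = "[u]"]) (simp_all add: is_edge_commute)
  then show ?case by simp
qed auto

lemma edge_chain_map:
  assumes "edge_chain n p"
    and "\<And>u w v. u \<in> set p \<Longrightarrow> w \<in> set p \<Longrightarrow> v \<in> set p \<Longrightarrow> is_edge n u w v \<Longrightarrow>
      is_edge n' (g u) (g w) (g v)"
  shows "edge_chain n' (map g p)"
  using assms by (induction n p rule: edge_chain.induct) auto

definition spanning_path :: "nat \<Rightarrow> nat list \<Rightarrow> nat list \<Rightarrow> nat list set \<Rightarrow> bool" where
  "spanning_path n a b S \<longleftrightarrow> (\<exists>p. loose_path n p \<and> hd p = a \<and> last p = b \<and> set p = S)"

lemma covered_iff_spanning_path: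
  "covered n (a, b, x, y) \<longleftrightarrow> spanning_path n a b (verts n - {x, y})"
  unfolding covered_def spanning_path_def by simp

lemma spanning_pathI:
  "edge_chain n p \<Longrightarrow> distinct p \<Longrightarrow> hd p = a \<Longrightarrow> last p = b \<Longrightarrow> spanning_path n a b (set p)"
  unfolding spanning_path_def loose_path_iff_edge_chain by blast

lemma spanning_pathE:
  assumes "spanning_path n a b S"
  obtains p where "edge_chain n p" "distinct p" "p \<noteq> []" "hd p = a" "last p = b" "set p = S"
  using assms edge_chain_not_Nil unfolding spanning_path_def loose_path_iff_edge_chain by blast

lemma spanning_path_singleton: "spanning_path n v v {v}"
  using spanning_pathI[of n "[v]"] by simp

lemma spanning_path_rev:
  assumes "spanning_path n a b S"
  shows "spanning_path n b a S"
proof -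
  obtain p where p: "edge_chain n p" "distinct p" "p \<noteq> []" "hd p = a" "last p = b" "set p = S"
    using assms by (rule spanning_pathE)
  show ?thesis
    using spanning_pathI[OF edge_chain_rev[OF p(1)]] p by (simp add: hd_rev last_rev)
qed

lemma spanning_path_join:
  assumes "spanning_path n a b S" "spanning_path n c d T" "is_edge n b w c"
    and "S \<inter> T = {}" "w \<notin> S \<union> T"
  shows "spanning_path n a d (S \<union> insert w T)"
proof -
  obtain p where p: "edge_chain n p" "distinct p" "p \<noteq> []" "hd p = a" "last p = b" "set p = S"
    using assms(1) by (rule spanning_pathE)
  obtain q where q: "edge_chain n q" "distinct q" "q \<noteq> []" "hd q = c" "last q = d" "set q = T"
    using assms(2) by (rule spanning_pathE)
  have "spanning_path n a d (set (p @ w # q))"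
    by (rule spanning_pathI) (use p q assms(3-5) edge_chain_append in auto)
  then show ?thesis using p q by simp
qed

lemma spanning_path_map:
  assumes "spanning_path n a b S" "inj_on g S"
    and "\<And>u w v. u \<in> S \<Longrightarrow> w \<in> S \<Longrightarrow> v \<in> S \<Longrightarrow> is_edge n u w v \<Longrightarrow> is_edge n' (g u) (g w) (g v)"
  shows "spanning_path n' (g a) (g b) (g ` S)"
proof -
  obtain p where p: "edge_chain n p" "distinct p" "p \<noteq> []" "hd p = a" "last p = b" "set p = S"
    using assms(1) by (rule spanning_pathE)
  have "spanning_path n' (g a) (g b) (set (map g p))"
    by (rule spanning_pathI)
      (use p assms(2,3) in \<open>auto intro: edge_chain_map simp: distinct_map hd_map last_map\<close>)
  then show ?thesis using p by simp
qed

section \<open>Vertices, columns and layers\<close>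

lemma verts_length: "v \<in> verts n \<Longrightarrow> length v = n"
  unfolding verts_def by simp

lemma verts_nth: "v \<in> verts n \<Longrightarrow> j < n \<Longrightarrow> v ! j \<in> {0,1,2}"
  unfolding verts_def using nth_mem by blast

lemma map_upt_in_verts: "(\<And>k. k < n \<Longrightarrow> g k \<in> {0,1,2}) \<Longrightarrow> map g [0..<n] \<in> verts n"
  unfolding verts_def by (simp add: image_subset_iff)

lemma finite_verts: "finite (verts n)"
proof (rule finite_subset)
  show "verts n \<subseteq> {v. set v \<subseteq> {0,1,2} \<and> length v = n}" unfolding verts_def by blast
qed (rule finite_lists_length_eq, simp)

lemma list_update_in_verts: "v \<in> verts n \<Longrightarrow> c \<le> 2 \<Longrightarrow> v[i := c] \<in> verts n"
  unfolding verts_def using set_update_subset_insert by fastforce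

lemma snoc_in_verts_Suc [simp]: "v @ [k] \<in> verts (Suc n) \<longleftrightarrow> v \<in> verts n \<and> k \<in> {0,1,2}"
  unfolding verts_def by auto

lemma verts_Suc_iff: "w \<in> verts (Suc n) \<longleftrightarrow> (\<exists>v k. w = v @ [k] \<and> v \<in> verts n \<and> k \<in> {0,1,2})"
proof (cases w rule: rev_exhaust)
  case Nil
  then show ?thesis using verts_length by fastforce
qed simp

lemma is_edge_snoc:
  assumes "is_edge n u w v" "k \<in> {0,1,2}"
  shows "is_edge (Suc n) (u @ [k]) (w @ [k]) (v @ [k])"
proof -
  obtain i where "i < n" "\<forall>j<n. j \<noteq> i \<longrightarrow> u ! j = w ! j \<and> w ! j = v ! j"
    using assms(1) unfolding is_edge_def by blast
  moreover have "length u = n" "length w = n" "length v = n"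
    using assms(1) verts_length unfolding is_edge_def by blast+
  ultimately show ?thesis
    using assms unfolding is_edge_def
    by (intro conjI exI[of _ i]) (auto simp: nth_append less_Suc_eq)
qed

lemma is_edge_column:
  assumes "v \<in> verts n" "distinct [p, q, r]" "{p, q, r} \<subseteq> {0,1,2}"
  shows "is_edge (Suc n) (v @ [p]) (v @ [q]) (v @ [r])"
  using assms verts_length[OF assms(1)] unfolding is_edge_def
  by (intro conjI exI[of _ n]) (auto simp: nth_append)

definition layer :: "nat \<Rightarrow> nat list set \<Rightarrow> nat list set" where
  "layer k S = (\<lambda>v. v @ [k]) ` S"

lemma snoc_in_layer [simp]: "v @ [k] \<in> layer l S \<longleftrightarrow> k = l \<and> v \<in> S"
  unfolding layer_def by auto

lemma Nil_notin_layer [simp]: "[] \<notin> layer l S"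
  unfolding layer_def by auto

lemma spanning_path_layer:
  assumes "spanning_path n a b S" "k \<in> {0,1,2}"
  shows "spanning_path (Suc n) (a @ [k]) (b @ [k]) (layer k S)"
  unfolding layer_def
  by (rule spanning_path_map[OF assms(1)]) (use assms(2) is_edge_snoc in \<open>auto simp: inj_on_def\<close>)

text \<open>The paths in layers \<open>i\<close>, \<open>j\<close>, \<open>k\<close> are linked by the column edges
  \<open>{d @ [i], d @ [k], d @ [j]}\<close> and \<open>{e @ [j], e @ [i], e @ [k]}\<close>; their middle vertices are
  the only vertices visited outside the three layer paths.\<close>

lemma spanning_path_three_layers:
  assumes "spanning_path n a d S1" "spanning_path n d e S2" "spanning_path n e b S3"
    and ijk: "distinct [i, j, k]" "{i, j, k} \<subseteq> {0,1,2}"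
    and "d \<in> verts n" "e \<in> verts n" "e \<notin> S1" "d \<notin> S3"
  shows "spanning_path (Suc n) (a @ [i]) (b @ [k])
    (layer i S1 \<union> insert (d @ [k]) (layer j S2 \<union> insert (e @ [i]) (layer k S3)))"
proof -
  have L: "spanning_path (Suc n) (a @ [i]) (d @ [i]) (layer i S1)"
    "spanning_path (Suc n) (d @ [j]) (e @ [j]) (layer j S2)"
    "spanning_path (Suc n) (e @ [k]) (b @ [k]) (layer k S3)"
    using assms(1-3) ijk(2) by (auto intro: spanning_path_layer)
  have "spanning_path (Suc n) (d @ [j]) (b @ [k]) (layer j S2 \<union> insert (e @ [i]) (layer k S3))"
    by (rule spanning_path_join[OF L(2,3) is_edge_column])
      (use assms in \<open>auto simp: layer_def\<close>)
  then show ?thesis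
    by (rule spanning_path_join[OF L(1) _ is_edge_column])
      (use assms in \<open>auto simp: layer_def\<close>)
qed

section \<open>Symmetries\<close>

lemma is_symmetryE:
  assumes "is_symmetry n f"
  obtains \<sigma> \<pi> where "\<sigma> permutes {..<n}" "\<And>j. j < n \<Longrightarrow> \<pi> j permutes {0,1,2}"
    "\<And>v. v \<in> verts n \<Longrightarrow> f v = map (\<lambda>j. \<pi> j (v ! \<sigma> j)) [0..<n]"
  using assms unfolding is_symmetry_def by blast

lemma symmetry_in_verts:
  assumes "is_symmetry n f" "v \<in> verts n"
  shows "f v \<in> verts n"
proof -
  obtain \<sigma> \<pi> where \<sigma>: "\<sigma> permutes {..<n}" and \<pi>: "\<And>j. j < n \<Longrightarrow> \<pi> j permutes {0,1,2}"
    and f: "f v = map (\<lambda>j. \<pi> j (v ! \<sigma> j)) [0..<n]"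
    using assms by (elim is_symmetryE) blast
  have "\<pi> j (v ! \<sigma> j) \<in> {0,1,2}" if "j < n" for j
    using permutes_in_image[OF \<pi>[OF that]] verts_nth[OF assms(2)] permutes_in_image[OF \<sigma>] that
    by simp
  then show ?thesis unfolding f by (rule map_upt_in_verts)
qed

lemma symmetry_nth_eq_iff:
  assumes "is_symmetry n f"
  obtains \<sigma> where "\<sigma> permutes {..<n}"
    "\<And>u w j. u \<in> verts n \<Longrightarrow> w \<in> verts n \<Longrightarrow> j < n \<Longrightarrow> f u ! j = f w ! j \<longleftrightarrow> u ! \<sigma> j = w ! \<sigma> j"
proof -
  obtain \<sigma> \<pi> where \<sigma>: "\<sigma> permutes {..<n}" and \<pi>: "\<And>j. j < n \<Longrightarrow> \<pi> j permutes {0,1,2}"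
    and f: "\<And>v. v \<in> verts n \<Longrightarrow> f v = map (\<lambda>j. \<pi> j (v ! \<sigma> j)) [0..<n]"
    using assms by (elim is_symmetryE) blast
  have "inj (\<pi> j)" if "j < n" for j using permutes_inj[OF \<pi>[OF that]] .
  then show ?thesis
    by (intro that[OF \<sigma>]) (auto simp: f inj_eq)
qed

lemma symmetry_inj_on:
  assumes "is_symmetry n f"
  shows "inj_on f (verts n)"
proof (rule inj_onI)
  fix u w assume uw: "u \<in> verts n" "w \<in> verts n" "f u = f w"
  obtain \<sigma> where \<sigma>: "\<sigma> permutes {..<n}"
    and eq: "\<And>j. j < n \<Longrightarrow> f u ! j = f w ! j \<longleftrightarrow> u ! \<sigma> j = w ! \<sigma> j"
    using symmetry_nth_eq_iff[OF assms] uw(1,2) by metis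
  show "u = w"
  proof (rule nth_equalityI)
    show "length u = length w" using uw verts_length by simp
    fix k assume "k < length u"
    then have "k \<in> {..<n}" using uw verts_length by simp
    then obtain j where "j < n" "\<sigma> j = k" using \<sigma> by (metis lessThan_iff permutes_def)
    then show "u ! k = w ! k" using eq uw(3) by metis
  qed
qed

lemma symmetry_reflects_edge:
  assumes "is_symmetry n f" "u \<in> verts n" "w \<in> verts n" "v \<in> verts n"
    and "is_edge n (f u) (f w) (f v)"
  shows "is_edge n u w v"
proof -
  obtain \<sigma> where \<sigma>: "\<sigma> permutes {..<n}"
    and eq: "\<And>u w j. u \<in> verts n \<Longrightarrow> w \<in> verts n \<Longrightarrow> j < n \<Longrightarrow> f u ! j = f w ! j \<longleftrightarrow> u ! \<sigma> j = w ! \<sigma> j"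
    using symmetry_nth_eq_iff[OF assms(1)] by metis
  obtain i where "i < n" and agree: "\<forall>j<n. j \<noteq> i \<longrightarrow> f u ! j = f w ! j \<and> f w ! j = f v ! j"
    using assms(5) unfolding is_edge_def by blast
  have "u ! k = w ! k \<and> w ! k = v ! k" if "k < n" "k \<noteq> \<sigma> i" for k
  proof -
    obtain j where "j < n" "\<sigma> j = k"
      using \<sigma> \<open>k < n\<close> by (metis lessThan_iff permutes_def)
    then show ?thesis using agree eq assms(2-4) that(2) by metis
  qed
  moreover have "\<sigma> i < n" using permutes_in_image[OF \<sigma>] \<open>i < n\<close> by simp
  ultimately show ?thesis
    using assms(2-5) unfolding is_edge_def by blast
qed

lemma covered_if_symmetric_image_covered:
  assumes f: "is_symmetry n f" and "is_config n (a, b, x, y)"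
    and "covered n (f a, f b, f x, f y)"
  shows "covered n (a, b, x, y)"
proof -
  have V: "a \<in> verts n" "b \<in> verts n" "x \<in> verts n" "y \<in> verts n"
    using assms(2) unfolding is_config_def by auto
  have "f ` verts n = verts n"
    using symmetry_inj_on[OF f] symmetry_in_verts[OF f] finite_verts
    by (intro endo_inj_surj) auto
  then have bij: "bij_betw f (verts n) (verts n)"
    using symmetry_inj_on[OF f] by (simp add: bij_betw_def)
  define g where "g = inv_into (verts n) f"
  have bij_g: "bij_betw g (verts n) (verts n)" unfolding g_def by (rule bij_betw_inv_into[OF bij])
  have gf: "\<And>v. v \<in> verts n \<Longrightarrow> g (f v) = v"
    unfolding g_def using bij bij_betw_inv_into_left by metis
  have fg: "\<And>w. w \<in> verts n \<Longrightarrow> f (g w) = w"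
    unfolding g_def using bij bij_betw_inv_into_right by metis
  have "spanning_path n (g (f a)) (g (f b)) (g ` (verts n - {f x, f y}))"
  proof (rule spanning_path_map)
    show "spanning_path n (f a) (f b) (verts n - {f x, f y})"
      using assms(3) by (simp add: covered_iff_spanning_path)
    show "inj_on g (verts n - {f x, f y})"
      using bij_g by (meson Diff_subset bij_betw_def inj_on_subset)
    fix u w v
    assume "u \<in> verts n - {f x, f y}" "w \<in> verts n - {f x, f y}" "v \<in> verts n - {f x, f y}"
      and "is_edge n u w v"
    then show "is_edge n (g u) (g w) (g v)"
      using symmetry_reflects_edge[OF f] bij_betw_apply[OF bij_g] fg by simp
  qed
  moreover have "g ` (verts n - {f x, f y}) = g ` verts n - g ` {f x, f y}"
    using bij_g V symmetry_in_verts[OF f]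
    by (intro inj_on_image_set_diff) (auto simp: bij_betw_def)
  then have "g ` (verts n - {f x, f y}) = verts n - {x, y}"
    using bij_g gf V by (simp add: bij_betw_def)
  ultimately show ?thesis using gf V by (simp add: covered_iff_spanning_path)
qed

lemma covered_of_type:
  assumes "\<And>a b x y. is_config n (a, b, x, y) \<Longrightarrow> P n a b x y \<Longrightarrow> covered n (a, b, x, y)"
    and "is_config n c" "of_type P n c"
  shows "covered n c"
proof -
  obtain a b x y where c: "c = (a, b, x, y)" by (cases c)
  obtain f where f: "is_symmetry n f"
    and P: "P n (f a) (f b) (f x) (f y) \<or> P n (f a) (f b) (f y) (f x)"
    using assms(3) unfolding c of_type_def by auto
  have "is_config n (f a, f b, f x, f y)"
    using assms(2) symmetry_in_verts[OF f] inj_on_contraD[OF symmetry_inj_on[OF f]]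
    unfolding c is_config_def by auto
  then have "covered n (f a, f b, f x, f y) \<or> covered n (f a, f b, f y, f x)"
    using P assms(1) by (auto simp: is_config_def)
  then have "covered n (f a, f b, f x, f y)"
    by (auto simp: covered_def insert_commute)
  then show ?thesis
    using covered_if_symmetric_image_covered[OF f] assms(2) unfolding c by blast
qed

section \<open>Recognising \<open>\<phi>\<^sub>3\<close>- and \<open>\<phi>\<^sub>4\<close>-configurations\<close>

definition value_perm :: "nat \<Rightarrow> nat \<Rightarrow> nat \<Rightarrow> nat" where
  "value_perm p q v = (if v = p then 0 else if v = q then 1 else if v \<le> 2 then 2 else v)"

lemma value_perm_permutes:
  assumes "p \<in> {0,1,2}" "q \<in> {0,1,2}" "p \<noteq> q"
  shows "value_perm p q permutes {0,1,2}"
proof (rule bij_imp_permutes)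
  show "bij_betw (value_perm p q) {0,1,2} {0,1,2}"
    using assms by (auto simp: bij_betw_def inj_on_def value_perm_def)
qed (use assms in \<open>auto simp: value_perm_def\<close>)

lemma value_perm_simps:
  "value_perm p q p = 0" "p \<noteq> q \<Longrightarrow> value_perm p q q = 1"
  "r \<in> {0,1,2} \<Longrightarrow> r \<noteq> p \<Longrightarrow> r \<noteq> q \<Longrightarrow> value_perm p q r = 2"
  by (auto simp: value_perm_def)

lemma last_coordinate_symmetry:
  assumes "i < n" "\<rho> permutes {0,1,2}"
  obtains f where "is_symmetry n f" "\<And>v. f v ! (n - 1) = \<rho> (v ! i)"
    "\<And>j'. j' < n \<Longrightarrow> j' \<noteq> i \<Longrightarrow> \<exists>j < n - 1. \<forall>v. f v ! j = v ! j'"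
proof
  let ?\<tau> = "Transposition.transpose i (n - 1)"
  let ?\<pi> = "\<lambda>j. if j = n - 1 then \<rho> else id"
  show "is_symmetry n (\<lambda>v. map (\<lambda>j. ?\<pi> j (v ! ?\<tau> j)) [0..<n])"
    unfolding is_symmetry_def using assms
    by (intro exI[of _ ?\<tau>] exI[of _ ?\<pi>]) (auto intro: permutes_swap_id)
  show "map (\<lambda>j. ?\<pi> j (v ! ?\<tau> j)) [0..<n] ! (n - 1) = \<rho> (v ! i)" for v
    using assms by simp
  fix j' assume j': "j' < n" "j' \<noteq> i"
  show "\<exists>j < n - 1. \<forall>v. map (\<lambda>j. ?\<pi> j (v ! ?\<tau> j)) [0..<n] ! j = v ! j'"
  proof (cases "j' = n - 1")
    case True
    then show ?thesis using assms j' by (intro exI[of _ i]) auto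
  next
    case False
    then show ?thesis using j' by (intro exI[of _ j']) (auto simp: transpose_apply_other)
  qed
qed

definition phi3_pattern :: "nat \<Rightarrow> nat list \<Rightarrow> nat list \<Rightarrow> nat list \<Rightarrow> nat list \<Rightarrow> bool" where
  "phi3_pattern n a b x y \<longleftrightarrow> (\<exists>i<n. \<exists>j<n. j \<noteq> i \<and>
     a ! i = x ! i \<and> b ! i = y ! i \<and> a ! i \<noteq> b ! i \<and> (a ! j = y ! j \<or> b ! j = x ! j))"

lemma phi3_patternI:
  "i < n \<Longrightarrow> j < n \<Longrightarrow> j \<noteq> i \<Longrightarrow> a ! i = x ! i \<Longrightarrow> b ! i = y ! i \<Longrightarrow> a ! i \<noteq> b ! i \<Longrightarrow>
    a ! j = y ! j \<or> b ! j = x ! j \<Longrightarrow> phi3_pattern n a b x y"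
  unfolding phi3_pattern_def by blast

lemma phi3_of_phi3_pattern:
  assumes "a \<in> verts n" "b \<in> verts n" "phi3_pattern n a b x y"
  shows "\<exists>f. is_symmetry n f \<and> phi3 n (f a) (f b) (f x) (f y)"
proof -
  obtain i j' where ij': "i < n" "j' < n" "j' \<noteq> i" and
    i: "a ! i = x ! i" "b ! i = y ! i" "a ! i \<noteq> b ! i" and j': "a ! j' = y ! j' \<or> b ! j' = x ! j'"
    using assms(3) unfolding phi3_pattern_def by blast
  have "value_perm (a ! i) (b ! i) permutes {0,1,2}"
    using value_perm_permutes verts_nth assms(1,2) ij' i by blast
  then obtain f where f: "is_symmetry n f" "\<And>v. f v ! (n - 1) = value_perm (a ! i) (b ! i) (v ! i)"
    and other: "\<And>j'. j' < n \<Longrightarrow> j' \<noteq> i \<Longrightarrow> \<exists>j < n - 1. \<forall>v. f v ! j = v ! j'"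
    using last_coordinate_symmetry[OF ij'(1)] by metis
  obtain j where "j < n - 1" "\<forall>v. f v ! j = v ! j'" using other ij' by blast
  then have "phi3 n (f a) (f b) (f x) (f y)"
    unfolding phi3_def t3_def using f(2) i j' by (auto simp: value_perm_simps)
  then show ?thesis using f(1) by blast
qed

lemma of_type_phi3I:
  assumes "a \<in> verts n" "b \<in> verts n" "phi3_pattern n a b x y \<or> phi3_pattern n a b y x"
  shows "of_type phi3 n (a, b, x, y)"
  using assms phi3_of_phi3_pattern unfolding of_type_def by fastforce

definition phi4_pattern :: "nat \<Rightarrow> nat list \<Rightarrow> nat list \<Rightarrow> nat list \<Rightarrow> nat list \<Rightarrow> bool" where
  "phi4_pattern n a b x y \<longleftrightarrow> (\<exists>i<n. \<exists>j<n. j \<noteq> i \<and>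
     b ! i = x ! i \<and> distinct [a ! i, b ! i, y ! i] \<and>
     b ! j \<notin> {a ! j, x ! j, y ! j} \<and> a ! j \<in> {x ! j, y ! j})"

lemma phi4_patternI:
  "i < n \<Longrightarrow> j < n \<Longrightarrow> j \<noteq> i \<Longrightarrow> b ! i = x ! i \<Longrightarrow> distinct [a ! i, b ! i, y ! i] \<Longrightarrow>
    b ! j \<notin> {a ! j, x ! j, y ! j} \<Longrightarrow> a ! j \<in> {x ! j, y ! j} \<Longrightarrow> phi4_pattern n a b x y"
  unfolding phi4_pattern_def by blast

lemma phi4_of_phi4_pattern:
  assumes "a \<in> verts n" "b \<in> verts n" "y \<in> verts n" "phi4_pattern n a b x y"
  shows "\<exists>f. is_symmetry n f \<and> phi4 n (f a) (f b) (f x) (f y)"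
proof -
  obtain i j' where ij': "i < n" "j' < n" "j' \<noteq> i" and
    i: "b ! i = x ! i" "distinct [a ! i, b ! i, y ! i]" and
    j': "b ! j' \<notin> {a ! j', x ! j', y ! j'}" "a ! j' \<in> {x ! j', y ! j'}"
    using assms(4) unfolding phi4_pattern_def by blast
  have "value_perm (a ! i) (b ! i) permutes {0,1,2}"
    using i verts_nth[OF assms(1) ij'(1)] verts_nth[OF assms(2) ij'(1)]
    by (intro value_perm_permutes) auto
  then obtain f where f: "is_symmetry n f" "\<And>v. f v ! (n - 1) = value_perm (a ! i) (b ! i) (v ! i)"
    and other: "\<And>j'. j' < n \<Longrightarrow> j' \<noteq> i \<Longrightarrow> \<exists>j < n - 1. \<forall>v. f v ! j = v ! j'"
    using last_coordinate_symmetry[OF ij'(1)] by metis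
  obtain j where j: "j < n - 1" "\<forall>v. f v ! j = v ! j'" using other ij' by blast
  have "take (n - 1) (f b) \<noteq> take (n - 1) (f u)" if "u \<in> {a, x, y}" for u
  proof
    assume "take (n - 1) (f b) = take (n - 1) (f u)"
    then have "f b ! j = f u ! j" using j(1) by (metis nth_take)
    then show False using j(2) j'(1) that by auto
  qed
  then have "phi4 n (f a) (f b) (f x) (f y)"
    unfolding phi4_def t4_def using f(2) i j j' verts_nth[OF assms(3) ij'(1)]
    by (auto simp: value_perm_simps)
  then show ?thesis using f(1) by blast
qed

lemma of_type_phi4I:
  assumes "{a, b, x, y} \<subseteq> verts n" "phi4_pattern n a b x y \<or> phi4_pattern n a b y x"
  shows "of_type phi4 n (a, b, x, y)"
  using assms phi4_of_phi4_pattern unfolding of_type_def by fastforce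

section \<open>Relay vertices\<close>

definition third_value :: "nat \<Rightarrow> nat \<Rightarrow> nat" where
  "third_value p q = (if 0 \<notin> {p, q} then 0 else if 1 \<notin> {p, q} then 1 else 2)"

lemma third_value:
  "third_value p q \<le> 2" "third_value p q \<noteq> p" "third_value p q \<noteq> q"
  "p \<noteq> third_value p q" "q \<noteq> third_value p q"
  unfolding third_value_def by auto

lemma other_coordinate:
  fixes m k :: nat
  assumes "2 \<le> m" "k < m"
  obtains k' where "k' < m" "k' \<noteq> k"
  using assms by (metis One_nat_def less_2_cases_iff less_le_trans not_less_eq_eq)

lemma two_more_coordinates:
  fixes m k1 k2 :: nat
  assumes "4 \<le> m" "k1 < m" "k2 < m" "k1 \<noteq> k2"
  obtains k3 k4 where "k3 < m" "k4 < m" "distinct [k1, k2, k3, k4]"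
proof -
  have "\<exists>k3 k4. k3 < 4 \<and> k4 < 4 \<and> k3 \<noteq> k1 \<and> k3 \<noteq> k2 \<and> k4 \<noteq> k1 \<and> k4 \<noteq> k2 \<and> k3 \<noteq> k4"
    by presburger
  then obtain k3 k4 where "k3 < 4" "k4 < 4" "k3 \<noteq> k1" "k3 \<noteq> k2" "k4 \<noteq> k1" "k4 \<noteq> k2" "k3 \<noteq> k4"
    by blast
  then show ?thesis using assms by (intro that[of k3 k4]) auto
qed

lemma replicate_in_verts: "replicate n 0 \<in> verts n"
  unfolding verts_def by (simp add: set_replicate_conv_if)

lemma mem_012_iff_le_2: "(c :: nat) \<in> {0,1,2} \<longleftrightarrow> c \<le> 2"
  by auto

text \<open>Vertices \<open>D\<close>, \<open>E\<close> at which a path from \<open>A\<close> to \<open>B\<close> changes layer: the three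
  \<open>\<phi>\<^sub>3\<close>-configurations provide its pieces \<open>A \<rightarrow> D\<close> (avoiding \<open>Y\<close>), \<open>D \<rightarrow> E\<close>
  (avoiding \<open>A\<close>, \<open>X\<close>) and \<open>E \<rightarrow> B\<close> inside the three layers.\<close>

definition relays_all_layers ::
    "nat \<Rightarrow> nat list \<Rightarrow> nat list \<Rightarrow> nat list \<Rightarrow> nat list \<Rightarrow> nat list \<Rightarrow> nat list \<Rightarrow> bool" where
  "relays_all_layers m A B X Y D E \<longleftrightarrow> D \<in> verts m \<and> E \<in> verts m \<and>
     D \<notin> {A, B, X, Y} \<and> E \<notin> {A, B, X, Y} \<and> D \<noteq> E \<and>
     (phi3_pattern m A D Y E \<or> phi3_pattern m A D E Y) \<and>
     (phi3_pattern m D E A X \<or> phi3_pattern m D E X A) \<and>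
     (phi3_pattern m E B A D \<or> phi3_pattern m E B D A)"

lemma relays_all_layers_if_agree_B:
  assumes "4 \<le> m" and V: "A \<in> verts m" "B \<in> verts m" "X \<in> verts m" "Y \<in> verts m"
    and k1: "k1 < m" "A ! k1 \<noteq> X ! k1" and k2: "k2 < m" "k2 \<noteq> k1" "A ! k2 = B ! k2"
  shows "\<exists>D E. relays_all_layers m A B X Y D E"
proof -
  obtain k3 k4 where k: "k3 < m" "k4 < m" "distinct [k1, k2, k3, k4]"
    using two_more_coordinates[OF assms(1) k1(1) k2(1)] k2(2) by metis
  have val: "A ! k \<le> 2" "X ! k \<le> 2" "Y ! k \<le> 2" if "k < m" for k
    using V that verts_nth mem_012_iff_le_2 by blast+
  define D where "D = (replicate m 0)[k1 := X ! k1, k2 := third_value (A ! k2) (A ! k2),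
    k3 := (if A ! k3 = Y ! k3 then third_value (A ! k3) (A ! k3) else Y ! k3),
    k4 := third_value (X ! k4) (Y ! k4)]"
  define E where "E = (replicate m 0)[k1 := A ! k1, k2 := third_value (A ! k2) (A ! k2),
    k3 := (if A ! k3 = Y ! k3 then third_value (A ! k3) (A ! k3) else A ! k3),
    k4 := X ! k4]"
  have DE: "D \<in> verts m" "E \<in> verts m"
    unfolding D_def E_def using val k k1 k2 third_value
    by (simp_all add: list_update_in_verts replicate_in_verts mem_012_iff_le_2)
  have "phi3_pattern m A D Y E \<or> phi3_pattern m A D E Y"
  proof (cases "A ! k3 = Y ! k3")
    case True
    have "phi3_pattern m A D Y E"
      by (rule phi3_patternI[of k3 m k1])
        (use True k k1 k2 third_value in \<open>auto simp: D_def E_def\<close>)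
    then show ?thesis ..
  next
    case False
    have "phi3_pattern m A D E Y"
      by (rule phi3_patternI[of k3 m k2])
        (use False k k1 k2 third_value in \<open>auto simp: D_def E_def\<close>)
    then show ?thesis ..
  qed
  moreover have "phi3_pattern m D E X A"
    by (rule phi3_patternI[of k1 m k4]) (use k k1 in \<open>auto simp: D_def E_def\<close>)
  moreover have "phi3_pattern m E B D A"
    by (rule phi3_patternI[of k2 m k1]) (use k k1 k2 third_value in \<open>auto simp: D_def E_def\<close>)
  moreover have "D ! k1 \<noteq> A ! k1" "D ! k2 \<noteq> B ! k2" "D ! k4 \<noteq> X ! k4" "D ! k4 \<noteq> Y ! k4"
    "E ! k2 \<noteq> A ! k2" "E ! k2 \<noteq> B ! k2" "E ! k1 \<noteq> X ! k1" "E ! k3 \<noteq> Y ! k3" "D ! k1 \<noteq> E ! k1"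
    using k k1 k2 third_value by (auto simp: D_def E_def)
  ultimately show ?thesis unfolding relays_all_layers_def using DE by (metis insertE singletonD)
qed

lemma relays_all_layers_if_agree_Y:
  assumes "4 \<le> m" and V: "A \<in> verts m" "B \<in> verts m" "X \<in> verts m" "Y \<in> verts m"
    and k1: "k1 < m" "A ! k1 \<noteq> X ! k1" and AB: "\<forall>k<m. k \<noteq> k1 \<longrightarrow> A ! k \<noteq> B ! k"
    and k3: "k3 < m" "k3 \<noteq> k1" "A ! k3 = Y ! k3"
  shows "\<exists>D E. relays_all_layers m A B X Y D E"
proof -
  obtain k2 k4 where k: "k2 < m" "k4 < m" "distinct [k1, k3, k2, k4]"
    using two_more_coordinates[OF assms(1) k1(1) k3(1)] k3(2) by metis
  have val: "A ! k \<le> 2" "B ! k \<le> 2" "X ! k \<le> 2" if "k < m" for k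
    using V that verts_nth mem_012_iff_le_2 by blast+
  have AB2: "A ! k2 \<noteq> B ! k2" using AB k by auto
  define D where "D = (replicate m 0)[k1 := X ! k1, k3 := third_value (A ! k3) (A ! k3),
    k2 := B ! k2, k4 := third_value (X ! k4) (B ! k4)]"
  define E where "E = (replicate m 0)[k1 := A ! k1, k3 := third_value (A ! k3) (A ! k3),
    k2 := A ! k2, k4 := X ! k4]"
  have DE: "D \<in> verts m" "E \<in> verts m"
    unfolding D_def E_def using val k k1 k3 third_value
    by (simp_all add: list_update_in_verts replicate_in_verts mem_012_iff_le_2)
  have "phi3_pattern m A D Y E"
    by (rule phi3_patternI[of k3 m k1]) (use k k1 k3 third_value in \<open>auto simp: D_def E_def\<close>)
  moreover have "phi3_pattern m D E X A"
    by (rule phi3_patternI[of k1 m k4]) (use k k1 in \<open>auto simp: D_def E_def\<close>)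
  moreover have "phi3_pattern m E B A D"
    by (rule phi3_patternI[of k2 m k3]) (use k k1 k3 AB2 in \<open>auto simp: D_def E_def\<close>)
  moreover have "D ! k1 \<noteq> A ! k1" "D ! k4 \<noteq> B ! k4" "D ! k4 \<noteq> X ! k4" "D ! k3 \<noteq> Y ! k3"
    "E ! k3 \<noteq> A ! k3" "E ! k2 \<noteq> B ! k2" "E ! k1 \<noteq> X ! k1" "E ! k3 \<noteq> Y ! k3" "D ! k1 \<noteq> E ! k1"
    using k k1 k3 AB2 third_value by (auto simp: D_def E_def)
  ultimately show ?thesis unfolding relays_all_layers_def using DE by (metis insertE singletonD)
qed

lemma relays_all_layers_if_free_value:
  assumes "4 \<le> m" and V: "A \<in> verts m" "B \<in> verts m" "X \<in> verts m" "Y \<in> verts m"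
    and k1: "k1 < m" "A ! k1 \<noteq> X ! k1" and AB: "\<forall>k<m. k \<noteq> k1 \<longrightarrow> A ! k \<noteq> B ! k"
    and AY: "\<forall>k<m. k \<noteq> k1 \<longrightarrow> A ! k \<noteq> Y ! k"
    and g: "g < m" "g \<noteq> k1" and c: "c \<le> 2" "c \<notin> {B ! g, X ! g, Y ! g}"
  shows "\<exists>D E. relays_all_layers m A B X Y D E"
proof -
  obtain a b where k: "a < m" "b < m" "distinct [k1, g, a, b]"
    using two_more_coordinates[OF assms(1) k1(1) g(1)] g(2) by metis
  have val: "A ! k \<le> 2" "B ! k \<le> 2" "X ! k \<le> 2" "Y ! k \<le> 2" if "k < m" for k
    using V that verts_nth mem_012_iff_le_2 by blast+
  have AB': "A ! a \<noteq> B ! a" "A ! b \<noteq> Y ! b" using AB AY k by auto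
  define D where "D = (replicate m 0)[k1 := A ! k1, g := c, a := B ! a, b := Y ! b]"
  define E where "E = (replicate m 0)[k1 := X ! k1, g := c, a := A ! a, b := A ! b]"
  have DE: "D \<in> verts m" "E \<in> verts m"
    unfolding D_def E_def using val k k1 g c third_value
    by (simp_all add: list_update_in_verts replicate_in_verts mem_012_iff_le_2)
  have "phi3_pattern m A D E Y"
    by (rule phi3_patternI[of b m g]) (use k g AB' in \<open>auto simp: D_def E_def\<close>)
  moreover have "phi3_pattern m D E A X"
    by (rule phi3_patternI[of k1 m a]) (use k k1 in \<open>auto simp: D_def E_def\<close>)
  moreover have "phi3_pattern m E B A D"
    by (rule phi3_patternI[of a m g]) (use k g AB' in \<open>auto simp: D_def E_def\<close>)
  moreover have "D ! a \<noteq> A ! a" "D ! g \<noteq> B ! g" "D ! k1 \<noteq> X ! k1" "D ! g \<noteq> Y ! g"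
    "E ! k1 \<noteq> A ! k1" "E ! a \<noteq> B ! a" "E ! g \<noteq> X ! g" "E ! b \<noteq> Y ! b" "D ! k1 \<noteq> E ! k1"
    using k k1 g c AB' by (auto simp: D_def E_def)
  ultimately show ?thesis unfolding relays_all_layers_def using DE by (metis insertE singletonD)
qed

lemma relays_all_layers_if_no_free_value:
  assumes "4 \<le> m" and V: "A \<in> verts m" "B \<in> verts m" "X \<in> verts m" "Y \<in> verts m"
    and k1: "k1 < m" "A ! k1 \<noteq> X ! k1" and AB: "\<forall>k<m. k \<noteq> k1 \<longrightarrow> A ! k \<noteq> B ! k"
    and AY: "\<forall>k<m. k \<noteq> k1 \<longrightarrow> A ! k \<noteq> Y ! k"
    and BXY: "\<forall>k<m. k \<noteq> k1 \<longrightarrow> B ! k \<noteq> Y ! k \<and> B ! k \<noteq> X ! k"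
  shows "\<exists>D E. relays_all_layers m A B X Y D E"
proof -
  obtain g where g: "g < m" "g \<noteq> k1"
    by (rule other_coordinate[of m k1]) (use assms(1) k1(1) in auto)
  obtain a b where k: "a < m" "b < m" "distinct [k1, g, a, b]"
    using two_more_coordinates[OF assms(1) k1(1) g(1)] g(2) by metis
  have val: "A ! k \<le> 2" "B ! k \<le> 2" "X ! k \<le> 2" "Y ! k \<le> 2" if "k < m" for k
    using V that verts_nth mem_012_iff_le_2 by blast+
  have AB': "A ! a \<noteq> B ! a" "A ! b \<noteq> Y ! b" "B ! b \<noteq> Y ! b" "B ! g \<noteq> Y ! g" "B ! g \<noteq> X ! g"
    using AB AY BXY k g by auto
  define D where "D = (replicate m 0)[k1 := A ! k1, g := B ! g, a := B ! a, b := Y ! b]"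
  define E where "E = (replicate m 0)[k1 := X ! k1, g := B ! g, a := A ! a, b := A ! b]"
  have DE: "D \<in> verts m" "E \<in> verts m"
    unfolding D_def E_def using val k k1 g third_value
    by (simp_all add: list_update_in_verts replicate_in_verts mem_012_iff_le_2)
  have "phi3_pattern m A D E Y"
    by (rule phi3_patternI[of b m g]) (use k g AB' in \<open>auto simp: D_def E_def\<close>)
  moreover have "phi3_pattern m D E A X"
    by (rule phi3_patternI[of k1 m a]) (use k k1 in \<open>auto simp: D_def E_def\<close>)
  moreover have "phi3_pattern m E B A D"
    by (rule phi3_patternI[of a m g]) (use k g AB' in \<open>auto simp: D_def E_def\<close>)
  moreover have "D ! a \<noteq> A ! a" "D ! b \<noteq> B ! b" "D ! k1 \<noteq> X ! k1" "D ! g \<noteq> Y ! g"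
    "E ! k1 \<noteq> A ! k1" "E ! a \<noteq> B ! a" "E ! g \<noteq> X ! g" "E ! b \<noteq> Y ! b" "D ! k1 \<noteq> E ! k1"
    using k k1 g AB' by (auto simp: D_def E_def)
  ultimately show ?thesis unfolding relays_all_layers_def using DE by (metis insertE singletonD)
qed

lemma relays_all_layers_exist:
  assumes "4 \<le> m" "A \<in> verts m" "B \<in> verts m" "X \<in> verts m" "Y \<in> verts m" "A \<noteq> X"
  shows "\<exists>D E. relays_all_layers m A B X Y D E"
proof -
  have "length A = m" "length X = m" using assms(2,4) verts_length by blast+
  then obtain k1 where k1: "k1 < m" "A ! k1 \<noteq> X ! k1" using assms(6) nth_equalityI by metis
  show ?thesis
  proof (cases "\<exists>k2<m. k2 \<noteq> k1 \<and> A ! k2 = B ! k2")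
    case True
    then show ?thesis using relays_all_layers_if_agree_B[OF assms(1-5) k1] by blast
  next
    case AB: False
    show ?thesis
    proof (cases "\<exists>k3<m. k3 \<noteq> k1 \<and> A ! k3 = Y ! k3")
      case True
      then show ?thesis using relays_all_layers_if_agree_Y[OF assms(1-5) k1] AB by blast
    next
      case AY: False
      show ?thesis
      proof (cases "\<exists>g<m. g \<noteq> k1 \<and> (\<exists>c\<le>2. c \<notin> {B ! g, X ! g, Y ! g})")
        case True
        then show ?thesis using relays_all_layers_if_free_value[OF assms(1-5) k1] AB AY by blast
      next
        case False
        have "B ! k \<noteq> Y ! k \<and> B ! k \<noteq> X ! k" if "k < m" "k \<noteq> k1" for k
        proof -
          have "third_value (B ! k) (X ! k) \<in> {B ! k, X ! k, Y ! k}"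
            "third_value (B ! k) (Y ! k) \<in> {B ! k, X ! k, Y ! k}"
            using False that third_value(1) by blast+
          then show ?thesis using third_value(2-5) by auto
        qed
        then show ?thesis using relays_all_layers_if_no_free_value[OF assms(1-5) k1] AB AY by blast
      qed
    qed
  qed
qed

text \<open>As above, but now the middle layer is covered by a Hamiltonian path from \<open>P\<close> to \<open>R\<close>,
  and \<open>X\<close>, \<open>Y\<close> are avoided in the first and last layer.\<close>

definition relays_two_layers ::
    "nat \<Rightarrow> nat list \<Rightarrow> nat list \<Rightarrow> nat list \<Rightarrow> nat list \<Rightarrow> nat list \<Rightarrow> nat list \<Rightarrow> bool" where
  "relays_two_layers m A B X Y P R \<longleftrightarrow> P \<in> verts m \<and> R \<in> verts m \<and>
     P \<notin> {A, B, X, Y} \<and> R \<notin> {A, B, X, Y} \<and> P \<noteq> R \<and>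
     (phi3_pattern m A P X R \<or> phi3_pattern m A P R X) \<and>
     (phi3_pattern m R B Y P \<or> phi3_pattern m R B P Y)"

lemma relays_two_layers_if_differ:
  assumes "4 \<le> m" and V: "A \<in> verts m" "B \<in> verts m" "X \<in> verts m" "Y \<in> verts m"
    and k1: "k1 < m" "A ! k1 \<noteq> X ! k1" and k2: "k2 < m" "k2 \<noteq> k1" "B ! k2 \<noteq> Y ! k2"
  shows "\<exists>P R. relays_two_layers m A B X Y P R"
proof -
  obtain k3 k4 where k: "k3 < m" "k4 < m" "distinct [k1, k2, k3, k4]"
    using two_more_coordinates[OF assms(1) k1(1) k2(1)] k2(2) by metis
  have val: "A ! k \<le> 2" "B ! k \<le> 2" "X ! k \<le> 2" "Y ! k \<le> 2" if "k < m" for k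
    using V that verts_nth mem_012_iff_le_2 by blast+
  define P where "P = (replicate m 0)[k1 := X ! k1, k2 := B ! k2,
    k3 := third_value (A ! k3) (Y ! k3), k4 := third_value (X ! k4) (B ! k4)]"
  define R where "R = (replicate m 0)[k1 := A ! k1, k2 := Y ! k2,
    k3 := third_value (A ! k3) (Y ! k3), k4 := third_value (X ! k4) (B ! k4)]"
  have PR: "P \<in> verts m" "R \<in> verts m"
    unfolding P_def R_def using val k k1 k2 third_value
    by (simp_all add: list_update_in_verts replicate_in_verts)
  have "phi3_pattern m A P R X"
    by (rule phi3_patternI[of k1 m k3]) (use k k1 in \<open>auto simp: P_def R_def\<close>)
  moreover have "phi3_pattern m R B Y P"
    by (rule phi3_patternI[of k2 m k3]) (use k k2 in \<open>auto simp: P_def R_def\<close>)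
  moreover have "P ! k1 \<noteq> A ! k1" "P ! k4 \<noteq> B ! k4" "P ! k4 \<noteq> X ! k4" "P ! k2 \<noteq> Y ! k2"
    "R ! k3 \<noteq> A ! k3" "R ! k2 \<noteq> B ! k2" "R ! k1 \<noteq> X ! k1" "R ! k3 \<noteq> Y ! k3" "P ! k1 \<noteq> R ! k1"
    using k k1 k2 third_value by (auto simp: P_def R_def)
  ultimately show ?thesis unfolding relays_two_layers_def using PR by (metis insertE singletonD)
qed

lemma relays_two_layers_if_agree:
  assumes "4 \<le> m" and V: "A \<in> verts m" "B \<in> verts m" "X \<in> verts m" "Y \<in> verts m"
    and k1: "k1 < m" "A ! k1 \<noteq> X ! k1" and BY: "\<forall>k<m. k \<noteq> k1 \<longrightarrow> B ! k = Y ! k"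
  shows "\<exists>P R. relays_two_layers m A B X Y P R"
proof -
  obtain k2 where k2: "k2 < m" "k2 \<noteq> k1"
    by (rule other_coordinate[of m k1]) (use assms(1) k1(1) in auto)
  obtain k3 k4 where k: "k3 < m" "k4 < m" "distinct [k1, k2, k3, k4]"
    using two_more_coordinates[OF assms(1) k1(1) k2(1)] k2(2) by metis
  have val: "A ! k \<le> 2" "B ! k \<le> 2" "X ! k \<le> 2" "Y ! k \<le> 2" if "k < m" for k
    using V that verts_nth mem_012_iff_le_2 by blast+
  have BY2: "B ! k2 = Y ! k2" using BY k2 by blast
  define P where "P = (replicate m 0)[k1 := X ! k1, k2 := third_value (B ! k2) (B ! k2),
    k3 := Y ! k3, k4 := third_value (A ! k4) (X ! k4)]"
  define R where "R = (replicate m 0)[k1 := A ! k1, k2 := third_value (B ! k2) (B ! k2),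
    k3 := Y ! k3, k4 := third_value (A ! k4) (X ! k4)]"
  have PR: "P \<in> verts m" "R \<in> verts m"
    unfolding P_def R_def using val k k1 k2 third_value
    by (simp_all add: list_update_in_verts replicate_in_verts)
  have "phi3_pattern m A P R X"
    by (rule phi3_patternI[of k1 m k2]) (use k k1 k2 in \<open>auto simp: P_def R_def\<close>)
  moreover have "phi3_pattern m R B P Y"
    by (rule phi3_patternI[of k2 m k3]) (use k k2 BY2 third_value in \<open>auto simp: P_def R_def\<close>)
  moreover have "P ! k1 \<noteq> A ! k1" "P ! k2 \<noteq> B ! k2" "P ! k4 \<noteq> X ! k4" "P ! k2 \<noteq> Y ! k2"
    "R ! k4 \<noteq> A ! k4" "R ! k2 \<noteq> B ! k2" "R ! k1 \<noteq> X ! k1" "R ! k2 \<noteq> Y ! k2" "P ! k1 \<noteq> R ! k1"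
    using k k1 k2 BY2 third_value by (auto simp: P_def R_def)
  ultimately show ?thesis unfolding relays_two_layers_def using PR by (metis insertE singletonD)
qed

lemma relays_two_layers_exist:
  assumes "4 \<le> m" "A \<in> verts m" "B \<in> verts m" "X \<in> verts m" "Y \<in> verts m" "A \<noteq> X"
  shows "\<exists>P R. relays_two_layers m A B X Y P R"
proof -
  have "length A = m" "length X = m" using assms(2,4) verts_length by blast+
  then obtain k1 where k1: "k1 < m" "A ! k1 \<noteq> X ! k1" using assms(6) nth_equalityI by metis
  show ?thesis
  proof (cases "\<exists>k2<m. k2 \<noteq> k1 \<and> B ! k2 \<noteq> Y ! k2")
    case True
    then show ?thesis using relays_two_layers_if_differ[OF assms(1-5) k1] by blast
  next
    case False
    then show ?thesis using relays_two_layers_if_agree[OF assms(1-5) k1] by blast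
  qed
qed

section \<open>Paths through the three layers\<close>

locale phi34_covered =
  fixes m :: nat
  assumes covered_phi3: "is_config m c \<Longrightarrow> of_type phi3 m c \<Longrightarrow> covered m c"
    and covered_phi4: "is_config m c \<Longrightarrow> of_type phi4 m c \<Longrightarrow> covered m c"
begin

lemma spanning_path_phi3:
  assumes "{a, b, x, y} \<subseteq> verts m" "distinct [a, b, x, y]"
    and "phi3_pattern m a b x y \<or> phi3_pattern m a b y x"
  shows "spanning_path m a b (verts m - {x, y})"
  using covered_phi3[of "(a, b, x, y)"] of_type_phi3I[of a m b x y] assms
  by (simp add: is_config_def covered_iff_spanning_path)

text \<open>Step from \<open>s\<close> along a coordinate \<open>i\<close> to \<open>y\<close>, leaving \<open>a\<close> as the third vertex of that edge;
  the remaining vertices are covered by the \<open>\<phi>\<^sub>4\<close>-configuration \<open>(a, t, s, y)\<close>.\<close>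

lemma hamiltonian_path:
  assumes "2 \<le> m" "s \<in> verts m" "t \<in> verts m" "s \<noteq> t"
  shows "spanning_path m s t (verts m)"
proof -
  obtain c where c: "c < m" "s ! c \<noteq> t ! c"
    using assms(2-4) verts_length nth_equalityI by metis
  obtain i where i: "i < m" "i \<noteq> c"
    using other_coordinate[OF assms(1) c(1)] by blast
  define yi where "yi = (if t ! i \<noteq> s ! i then t ! i else third_value (s ! i) (s ! i))"
  define y where "y = s[i := yi]"
  define a where "a = s[i := third_value (s ! i) yi]"
  have yi: "yi \<le> 2" "yi \<noteq> s ! i"
    unfolding yi_def using verts_nth[OF assms(3) i(1)] third_value by auto
  have len: "length s = m" using assms(2) verts_length by blast
  have ya: "y ! i = yi" "a ! i = third_value (s ! i) yi"
    "\<And>k. k \<noteq> i \<Longrightarrow> y ! k = s ! k" "\<And>k. k \<noteq> i \<Longrightarrow> a ! k = s ! k"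
    unfolding y_def a_def using len i by auto
  have V: "y \<in> verts m" "a \<in> verts m"
    unfolding y_def a_def using list_update_in_verts[OF assms(2)] yi(1) third_value(1) by blast+
  have "a ! c \<noteq> t ! c" "a ! i \<noteq> s ! i" "a ! i \<noteq> y ! i" "t ! c \<noteq> s ! c" "t ! c \<noteq> y ! c"
    "s ! i \<noteq> y ! i"
    using ya c i yi third_value by metis+
  then have D: "distinct [a, t, s, y]" by auto
  have "phi4_pattern m a t s y \<or> phi4_pattern m a t y s"
  proof (cases "t ! i = s ! i")
    case True
    then have "phi4_pattern m a t s y"
      by (intro phi4_patternI[of i m c]) (use ya c i yi third_value in auto)
    then show ?thesis ..
  next
    case False
    then have "phi4_pattern m a t y s"
      by (intro phi4_patternI[of i m c]) (use ya c i yi third_value yi_def in auto)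
    then show ?thesis ..
  qed
  then have "covered m (a, t, s, y)"
    using covered_phi4 of_type_phi4I[of a t s y m] assms V D by (simp add: is_config_def)
  moreover have "is_edge m s y a"
    unfolding is_edge_def using ya i assms(2) V D by auto
  ultimately have "spanning_path m s t ({s} \<union> insert y (verts m - {s, y}))"
    using D
    by (intro spanning_path_join[OF spanning_path_singleton]) (auto simp: covered_iff_spanning_path)
  also have "{s} \<union> insert y (verts m - {s, y}) = verts m" using assms(2) V by auto
  finally show ?thesis .
qed

lemma covered_snoc_all_layers:
  assumes "4 \<le> m" and V: "A \<in> verts m" "B \<in> verts m" "X \<in> verts m" "Y \<in> verts m"
    and A: "A \<notin> {B, X, Y}"
    and ijk: "distinct [i, j, k]" "{i, j, k} \<subseteq> {0,1,2}" and s: "s \<in> {j, k}"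
  shows "covered (Suc m) (A @ [s], B @ [k], X @ [j], Y @ [i])"
proof -
  obtain D E where "relays_all_layers m A B X Y D E"
    using relays_all_layers_exist[OF assms(1) V] A by blast
  then have DE: "D \<in> verts m" "E \<in> verts m" "D \<notin> {A, B, X, Y}" "E \<notin> {A, B, X, Y}" "D \<noteq> E"
    and phi3: "phi3_pattern m A D Y E \<or> phi3_pattern m A D E Y"
      "phi3_pattern m D E A X \<or> phi3_pattern m D E X A"
      "phi3_pattern m E B A D \<or> phi3_pattern m E B D A"
    unfolding relays_all_layers_def by blast+
  have "spanning_path m A D (verts m - {Y, E})" "spanning_path m D E (verts m - {A, X})"
    "spanning_path m E B (verts m - {A, D})"
    using phi3 V DE A by (auto intro!: spanning_path_phi3)
  then have path: "spanning_path (Suc m) (A @ [i]) (B @ [k])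
      (layer i (verts m - {Y, E}) \<union> insert (D @ [k])
        (layer j (verts m - {A, X}) \<union> insert (E @ [i]) (layer k (verts m - {A, D}))))"
    (is "spanning_path _ _ _ ?S")
    using ijk DE by (intro spanning_path_three_layers) auto
  define h where "h = (if s = j then k else j)"
  have h: "distinct [s, h, i]" "{s, h, i} \<subseteq> {0,1,2}" "s \<noteq> h" "{s, h} = {j, k}"
    using ijk s by (auto simp: h_def)
  have "spanning_path (Suc m) (A @ [s]) (B @ [k]) ({A @ [s]} \<union> insert (A @ [h]) ?S)"
    by (rule spanning_path_join[OF spanning_path_singleton path is_edge_column[OF V(1) h(1,2)]])
      (use h ijk DE in auto)
  moreover have "{A @ [s]} \<union> insert (A @ [h]) ?S = verts (Suc m) - {X @ [j], Y @ [i]}"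
  proof (rule set_eqI)
    fix w
    show "w \<in> {A @ [s]} \<union> insert (A @ [h]) ?S \<longleftrightarrow> w \<in> verts (Suc m) - {X @ [j], Y @ [i]}"
    proof (cases w rule: rev_exhaust)
      case Nil
      then show ?thesis using verts_length by fastforce
    next
      case (snoc v l)
      then show ?thesis using ijk h V DE A by auto
    qed
  qed
  ultimately show ?thesis by (simp add: covered_iff_spanning_path)
qed

lemma covered_snoc_two_layers:
  assumes "4 \<le> m" and V: "A \<in> verts m" "B \<in> verts m" "X \<in> verts m" "Y \<in> verts m"
    and "A \<noteq> X" "B \<noteq> Y" and ijk: "distinct [i, j, k]" "{i, j, k} \<subseteq> {0,1,2}"
  shows "covered (Suc m) (A @ [i], B @ [k], X @ [i], Y @ [k])"
proof -
  obtain P R where "relays_two_layers m A B X Y P R"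
    using relays_two_layers_exist[OF assms(1) V assms(6)] by blast
  then have PR: "P \<in> verts m" "R \<in> verts m" "P \<notin> {A, B, X, Y}" "R \<notin> {A, B, X, Y}" "P \<noteq> R"
    and phi3: "phi3_pattern m A P X R \<or> phi3_pattern m A P R X"
      "phi3_pattern m R B Y P \<or> phi3_pattern m R B P Y"
    unfolding relays_two_layers_def by blast+
  have "spanning_path m A P (verts m - {X, R})" "spanning_path m R B (verts m - {Y, P})"
    using phi3 V PR assms(6,7) by (auto intro!: spanning_path_phi3)
  moreover have "spanning_path m P R (verts m)"
    using hamiltonian_path assms(1) PR by simp
  ultimately have "spanning_path (Suc m) (A @ [i]) (B @ [k])
      (layer i (verts m - {X, R}) \<union> insert (P @ [k])
        (layer j (verts m) \<union> insert (R @ [i]) (layer k (verts m - {Y, P}))))"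
    (is "spanning_path _ _ _ ?S")
    using ijk PR by (intro spanning_path_three_layers) auto
  moreover have "?S = verts (Suc m) - {X @ [i], Y @ [k]}"
  proof (rule set_eqI)
    fix w
    show "w \<in> ?S \<longleftrightarrow> w \<in> verts (Suc m) - {X @ [i], Y @ [k]}"
    proof (cases w rule: rev_exhaust)
      case Nil
      then show ?thesis using verts_length by fastforce
    next
      case (snoc v l)
      then show ?thesis using ijk V PR by auto
    qed
  qed
  ultimately show ?thesis by (simp add: covered_iff_spanning_path)
qed

lemma covered_if_t_type:
  assumes "4 \<le> m" "P \<in> {t1, t2, t3, t4, t5}"
    and "is_config (Suc m) (a, b, x, y)" "P (Suc m) a b x y"
  shows "covered (Suc m) (a, b, x, y)"
proof -
  obtain A B X Y p q r u where snoc: "a = A @ [p]" "b = B @ [q]" "x = X @ [r]" "y = Y @ [u]"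
    and V: "A \<in> verts m" "B \<in> verts m" "X \<in> verts m" "Y \<in> verts m"
    using assms(3) unfolding is_config_def verts_Suc_iff by blast
  have len: "length A = m" "length B = m" "length X = m" "length Y = m"
    using V verts_length by blast+
  have dist: "distinct [A @ [p], B @ [q], X @ [r], Y @ [u]]"
    using assms(3) snoc unfolding is_config_def by simp
  consider
      (t1) "p = 0" "q = 1" "r = 0" "u = 2" "A \<notin> {B, X, Y}"
    | (t2) "p = 0" "q = 0" "r = 1" "u = 2" "A \<notin> {B, X, Y}"
    | (t3) "p = 0" "q = 1" "r = 0" "u = 1"
    | (t4) "p = 0" "q = 1" "r = 1" "u = 2" "B \<notin> {A, X, Y}"
    | (t5) "p = 0" "q = 0" "r = 1" "u = 2" "B \<notin> {A, X, Y}"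
    using assms(2,4) len unfolding snoc
    by (auto simp: t1_def t2_def t3_def t4_def t5_def nth_append)
  then show ?thesis
  proof cases
    case t1
    then show ?thesis using covered_snoc_all_layers[OF assms(1) V, of 2 0 1 0] snoc by simp
  next
    case t2
    then show ?thesis using covered_snoc_all_layers[OF assms(1) V, of 2 1 0 0] snoc by simp
  next
    case t3
    then show ?thesis using covered_snoc_two_layers[OF assms(1) V _ _, of 0 2 1] snoc dist by auto
  next
    case t4
    then show ?thesis
      using covered_snoc_all_layers[OF assms(1) V(2,1,3,4), of 2 1 0 1] snoc
      by (auto simp: covered_iff_spanning_path intro: spanning_path_rev)
  next
    case t5
    then show ?thesis
      using covered_snoc_all_layers[OF assms(1) V(2,1,3,4), of 2 1 0 0] snoc
      by (auto simp: covered_iff_spanning_path intro: spanning_path_rev)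
  qed
qed

lemma covered_of_t_type:
  assumes "4 \<le> m" "P \<in> {t1, t2, t3, t4, t5}" "is_config (Suc m) c" "of_type P (Suc m) c"
  shows "covered (Suc m) c"
  using covered_of_type[OF covered_if_t_type[OF assms(1,2)] assms(3,4)] .

end

theorem lemma1p5:
  fixes d :: nat
  assumes "d \<ge> 5"
    and "\<forall>c. is_config (d-1) c \<and>
           (of_type phi1 (d-1) c \<or> of_type phi2 (d-1) c \<or> of_type phi3 (d-1) c \<or> of_type phi4 (d-1) c)
           \<longrightarrow> covered (d-1) c"
  shows "\<forall>c. is_config d c \<and>
           (of_type t1 d c \<or> of_type t2 d c \<or> of_type t3 d c \<or> of_type t4 d c \<or> of_type t5 d c)
           \<longrightarrow> covered d c"
proof (intro allI impI)
  fix c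
  assume "is_config d c \<and>
    (of_type t1 d c \<or> of_type t2 d c \<or> of_type t3 d c \<or> of_type t4 d c \<or> of_type t5 d c)"
  then obtain P where P: "P \<in> {t1, t2, t3, t4, t5}" "is_config d c" "of_type P d c" by blast
  interpret phi34_covered "d - 1"
    using assms(2) by unfold_locales blast+
  have "d = Suc (d - 1)" "4 \<le> d - 1" using assms(1) by auto
  then show "covered d c" using covered_of_t_type P by metis
qed

end
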